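(* Let $ABC$ be a triangle and let $O$ be a point in its interior. Let $\alpha=d_A/h_A$, $\beta=d_B/h_B$ and $\gamma=d_C/h_C$, where $d_A,d_B,d_C$ are the distances from $O$ to the lines $BC,CA,AB$ and $h_A,h_B,h_C$ are the corresponding altitudes of the triangle. Thus $\alpha+\beta+\gamma=1$. Let $D$ be the intersection of line $CO$ with side $AB$. For a point $t$ on segment $AD$, let $F(t)$ be the second intersection of the line $tO$ with the boundary of the triangle; this point lies on side $BC$. Then $$\alpha\,\frac{tA}{tB}+\gamma\,\frac{F(t)C}{F(t)B}=\beta,$$ where $XY$ denotes the length of the segment $XY$. *)

theory Defs
  imports "HOL-Analysis.Analysis"
begin

end

theory Submission imports Defs begin

text \<open>Write \<open>P = a A + b B + c C\<close> in barycentric coordinates, which are positive as \<open>P\<close> is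
interior. The homothety with centre on \<open>BC\<close> and ratio \<open>a\<close> maps \<open>A\<close> to \<open>P\<close>, so \<open>\<alpha> = a\<close>, and
likewise \<open>\<beta> = b\<close>, \<open>\<gamma> = c\<close>. If \<open>t = (1 - q) A + q B\<close> and \<open>F = (1 - r) B + r C\<close> with
\<open>P = v t + (1 - v) F\<close>, comparing coordinates gives \<open>a = v (1 - q)\<close>, \<open>c = (1 - v) r\<close> and
\<open>b = v q + (1 - v) (1 - r)\<close>. Since \<open>tA/tB = q/(1 - q)\<close> and \<open>FC/FB = (1 - r)/r\<close>, the claimed
identity is exactly the equation for \<open>b\<close>. The restriction of \<open>t\<close> to \<open>AD\<close> is what makes the
second intersection lie on \<open>BC\<close> rather than on \<open>CA\<close>.\<close>

lemma infdist_homothety: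
  fixes L :: "'a::{real_normed_vector, heine_borel} set"
  assumes L: "affine L" "closed L" "Q \<in> L" and a: "0 < a"
  shows "infdist (Q + a *\<^sub>R (X - Q)) L = a * infdist X L"
proof -
  have ne: "L \<noteq> {}" using L by auto
  have mem: "Q + k *\<^sub>R (y - Q) \<in> L" if "y \<in> L" for y k
  proof -
    have "(1 - k) *\<^sub>R Q + k *\<^sub>R y \<in> L" using mem_affine[OF L(1) L(3) that] by simp
    moreover have "(1 - k) *\<^sub>R Q + k *\<^sub>R y = Q + k *\<^sub>R (y - Q)" by (simp add: algebra_simps)
    ultimately show ?thesis by simp
  qed
  have dist_image: "dist (Q + a *\<^sub>R (X - Q)) (Q + a *\<^sub>R (y - Q)) = a * dist X y" for y
  proof -
    have "(Q + a *\<^sub>R (X - Q)) - (Q + a *\<^sub>R (y - Q)) = a *\<^sub>R (X - y)" by (simp add: algebra_simps)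
    thus ?thesis using a by (simp add: dist_norm)
  qed
  obtain y where y: "y \<in> L" "infdist X L = dist X y"
    using infdist_attains_inf[OF L(2) ne] by metis
  have "infdist (Q + a *\<^sub>R (X - Q)) L \<le> a * infdist X L"
    using infdist_le[OF mem[OF y(1)]] dist_image y(2) by metis
  moreover obtain z where z: "z \<in> L" "infdist (Q + a *\<^sub>R (X - Q)) L = dist (Q + a *\<^sub>R (X - Q)) z"
    using infdist_attains_inf[OF L(2) ne] by metis
  define y' where "y' = Q + (1 / a) *\<^sub>R (z - Q)"
  have "z = Q + a *\<^sub>R (y' - Q)" using a by (simp add: y'_def algebra_simps)
  hence "infdist (Q + a *\<^sub>R (X - Q)) L = a * dist X y'" using z(2) dist_image by simp
  moreover have "infdist X L \<le> dist X y'" using infdist_le mem[OF z(1)] y'_def by metis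
  ultimately show ?thesis using a by (simp add: antisym)
qed

lemma barycentric_coords_unique:
  fixes A B C :: "'a::real_vector"
  assumes "\<not> collinear {A, B, C}"
    and "x1 *\<^sub>R A + y1 *\<^sub>R B + z1 *\<^sub>R C = x2 *\<^sub>R A + y2 *\<^sub>R B + z2 *\<^sub>R C"
    and "x1 + y1 + z1 = x2 + y2 + z2"
  shows "x1 = x2 \<and> y1 = y2 \<and> z1 = z2"
proof -
  define x where "x = x1 - x2"
  define z where "z = z1 - z2"
  have y: "y1 - y2 = - x - z" using assms(3) x_def z_def by simp
  have "x *\<^sub>R A + (y1 - y2) *\<^sub>R B + z *\<^sub>R C = 0"
    using assms(2) unfolding x_def z_def by (simp add: algebra_simps)
  hence e: "x *\<^sub>R (A - B) + z *\<^sub>R (C - B) = 0" using y by (simp add: algebra_simps)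
  have nc: "\<not> collinear {0, A - B, C - B}" using assms(1) collinear_3[of A B C] by simp
  have "z = 0"
  proof (rule ccontr)
    assume "z \<noteq> 0"
    hence "C - B = (- x / z) *\<^sub>R (A - B)" using e
      by (metis add.inverse_unique divide_inverse_commute inverse_eq_divide scaleR_minus_left
          scaleR_scaleR eq_vector_fraction_iff)
    thus False using nc collinear_lemma by blast
  qed
  moreover have "x = 0"
  proof (rule ccontr)
    assume "x \<noteq> 0"
    with e \<open>z = 0\<close> have "A - B = 0" by simp
    thus False using nc collinear_lemma by blast
  qed
  ultimately show ?thesis using y x_def z_def by simp
qed

lemma infdist_ratio_eq_barycentric:
  fixes A B C P :: "'a::euclidean_space"
  assumes nc: "\<not> collinear {A, B, C}" and P: "P = a *\<^sub>R A + b *\<^sub>R B + c *\<^sub>R C"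
    and sum: "a + b + c = 1" and pos: "0 < a" "0 < b" "0 < c"
  shows "infdist P (affine hull {B, C}) / infdist A (affine hull {B, C}) = a"
proof -
  define L where "L = affine hull {B, C}"
  define Q where "Q = (b / (b + c)) *\<^sub>R B + (c / (b + c)) *\<^sub>R C"
  have "b / (b + c) + c / (b + c) = 1" using pos by (simp add: add_divide_distrib[symmetric])
  hence QL: "Q \<in> L" unfolding L_def affine_hull_2 Q_def by blast
  have bcQ: "(b + c) *\<^sub>R Q = b *\<^sub>R B + c *\<^sub>R C" using pos by (simp add: Q_def scaleR_add_right)
  have bc: "b + c = 1 - a" using sum by simp
  have "P = a *\<^sub>R A + (b + c) *\<^sub>R Q" using P bcQ by (simp add: add.assoc)
  also have "\<dots> = Q + a *\<^sub>R (A - Q)" unfolding bc by (simp add: algebra_simps)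
  finally have PQ: "P = Q + a *\<^sub>R (A - Q)" .
  have "A \<notin> L"
    using nc affine_hull_3_imp_collinear[of A B C] by (auto simp: L_def insert_commute)
  hence "infdist A L \<noteq> 0" using in_closed_iff_infdist_zero[of L A] QL by (auto simp: L_def)
  moreover have "infdist P L = a * infdist A L"
    unfolding PQ by (rule infdist_homothety) (use QL pos in \<open>auto simp: L_def\<close>)
  ultimately show ?thesis unfolding L_def by simp
qed

lemma dist_convex_comb_left:
  fixes A B :: "'a::real_normed_vector"
  shows "0 \<le> q \<Longrightarrow> dist ((1 - q) *\<^sub>R A + q *\<^sub>R B) A = q * dist A B"
proof -
  assume "0 \<le> q"
  moreover have "(1 - q) *\<^sub>R A + q *\<^sub>R B - A = q *\<^sub>R (B - A)" by (simp add: algebra_simps)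
  ultimately show ?thesis by (simp add: dist_norm norm_minus_commute)
qed

lemma dist_convex_comb_right:
  fixes A B :: "'a::real_normed_vector"
  shows "q \<le> 1 \<Longrightarrow> dist ((1 - q) *\<^sub>R A + q *\<^sub>R B) B = (1 - q) * dist A B"
  using dist_convex_comb_left[of "1 - q" B A] by (simp add: add.commute dist_commute)

lemma closed_segment_subsegment_param:
  assumes "t \<in> closed_segment A ((1 - d) *\<^sub>R A + d *\<^sub>R B)" "0 \<le> d"
  obtains q where "0 \<le> q" "q \<le> d" "t = (1 - q) *\<^sub>R A + q *\<^sub>R B"
proof -
  obtain w where w: "0 \<le> w" "w \<le> 1" and t: "t = (1 - w) *\<^sub>R A + w *\<^sub>R ((1 - d) *\<^sub>R A + d *\<^sub>R B)"
    using assms(1) unfolding closed_segment_def by auto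
  have "t = (1 - w * d) *\<^sub>R A + (w * d) *\<^sub>R B" using t by (simp add: algebra_simps)
  moreover have "0 \<le> w * d" "w * d \<le> d" using w assms(2) by (auto simp: mult_left_le_one_le)
  ultimately show thesis using that by blast
qed

lemma cevian_foot_param:
  fixes A B C P :: "'a::real_vector"
  assumes nc: "\<not> collinear {A, B, C}" and P: "P = a *\<^sub>R A + b *\<^sub>R B + c *\<^sub>R C"
    and sum: "a + b + c = 1"
    and D: "D = (1 - d) *\<^sub>R A + d *\<^sub>R B" and col: "collinear {C, P, D}"
  shows "(a + b) * d = b"
proof -
  have "C \<noteq> D"
  proof
    assume "C = D"
    hence "0 *\<^sub>R A + 0 *\<^sub>R B + 1 *\<^sub>R C = (1 - d) *\<^sub>R A + d *\<^sub>R B + 0 *\<^sub>R C" using D by simp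
    from barycentric_coords_unique[OF nc this] show False by simp
  qed
  then obtain u where "P = u *\<^sub>R C + (1 - u) *\<^sub>R D" using col collinear_3_expand by blast
  hence "a *\<^sub>R A + b *\<^sub>R B + c *\<^sub>R C = ((1 - u) * (1 - d)) *\<^sub>R A + ((1 - u) * d) *\<^sub>R B + u *\<^sub>R C"
    using P D by (simp add: algebra_simps)
  from barycentric_coords_unique[OF nc this] sum have "a + b = 1 - u" "b = (1 - u) * d"
    by (auto simp: algebra_simps)
  thus ?thesis by simp
qed

lemma cevian_param_lt_one:
  fixes a b q :: real
  assumes "0 < a" "0 < b" "(a + b) * q \<le> b"
  shows "q < 1"
proof (rule ccontr)
  assume "\<not> q < 1"
  hence "a + b \<le> (a + b) * q" using assms mult_left_mono[of 1 q "a + b"] by simp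
  thus False using assms by linarith
qed

lemma transversal_meets_side:
  fixes A B C P :: "'a::real_vector"
  assumes P: "P = a *\<^sub>R A + b *\<^sub>R B + c *\<^sub>R C" and sum: "a + b + c = 1"
    and pos: "0 < a" "0 < b" "0 < c"
    and t: "t = (1 - q) *\<^sub>R A + q *\<^sub>R B" and q: "0 \<le> q" "(a + b) * q \<le> b"
  shows "\<exists>F \<in> closed_segment B C. collinear {t, P, F}"
proof -
  have "(a + b + c) * (1 - q) = 1 - q" using sum by simp
  hence "c * (1 - q) = (1 - q) - (a + b) * (1 - q)" by (simp add: algebra_simps)
  hence le: "c * (1 - q) \<le> 1 - q - a" using q by (simp add: algebra_simps)
  have q1: "q < 1" using cevian_param_lt_one pos q(2) by blast
  have "c * (1 - q) > 0" using pos q1 by simp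
  hence pos1: "1 - q - a > 0" using le by linarith
  define r where "r = c * (1 - q) / (1 - q - a)"
  define v where "v = a / (1 - q)"
  define F where "F = (1 - r) *\<^sub>R B + r *\<^sub>R C"
  have "0 \<le> r" "r \<le> 1" unfolding r_def using pos pos1 q1 le by auto
  hence FBC: "F \<in> closed_segment B C" unfolding F_def closed_segment_def by auto
  have ca: "v * (1 - q) = a" unfolding v_def using q1 by simp
  have "1 - v = (1 - q - a) / (1 - q)" unfolding v_def using q1 by (simp add: field_simps)
  hence cc: "(1 - v) * r = c" unfolding r_def using q1 pos1 by simp
  have "v * (1 - q) + (v * q + (1 - v) * (1 - r)) + (1 - v) * r = 1" by (simp add: algebra_simps)
  hence cb: "v * q + (1 - v) * (1 - r) = b" using ca cc sum by linarith
  have "v *\<^sub>R t + (1 - v) *\<^sub>R F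
      = (v * (1 - q)) *\<^sub>R A + (v * q + (1 - v) * (1 - r)) *\<^sub>R B + ((1 - v) * r) *\<^sub>R C"
    unfolding t F_def by (simp add: algebra_simps)
  hence "P = v *\<^sub>R t + (1 - v) *\<^sub>R F" unfolding ca cb cc P ..
  hence "collinear {t, P, F}" using collinear_3_expand by blast
  thus ?thesis using FBC by blast
qed

lemma transversal_ratio_identity:
  fixes A B C P :: "'a::real_normed_vector"
  assumes nc: "\<not> collinear {A, B, C}" and P: "P = a *\<^sub>R A + b *\<^sub>R B + c *\<^sub>R C"
    and sum: "a + b + c = 1" and c: "0 < c"
    and t: "t = (1 - q) *\<^sub>R A + q *\<^sub>R B" and q: "0 \<le> q" "q < 1"
    and F: "F \<in> closed_segment B C" and col: "collinear {t, P, F}"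
  shows "a * (dist t A / dist t B) + c * (dist F C / dist F B) = b"
proof -
  obtain r where r: "0 \<le> r" "r \<le> 1" and Fr: "F = (1 - r) *\<^sub>R B + r *\<^sub>R C"
    using F unfolding closed_segment_def by auto
  have "t \<noteq> F"
  proof
    assume "t = F"
    hence "(1 - q) *\<^sub>R A + q *\<^sub>R B + 0 *\<^sub>R C = 0 *\<^sub>R A + (1 - r) *\<^sub>R B + r *\<^sub>R C"
      using t Fr by simp
    from barycentric_coords_unique[OF nc this] q show False by simp
  qed
  then obtain v where v: "P = v *\<^sub>R t + (1 - v) *\<^sub>R F" using col collinear_3_expand by blast
  have "a *\<^sub>R A + b *\<^sub>R B + c *\<^sub>R C
      = (v * (1 - q)) *\<^sub>R A + (v * q + (1 - v) * (1 - r)) *\<^sub>R B + ((1 - v) * r) *\<^sub>R C"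
    using P v unfolding t Fr by (simp add: algebra_simps)
  from barycentric_coords_unique[OF nc this] sum
  have bary: "a = v * (1 - q)" "b = v * q + (1 - v) * (1 - r)" "c = (1 - v) * r"
    by (auto simp: algebra_simps)
  have "r > 0" using bary(3) c r(1) by (cases "r = 0") auto
  moreover have "dist A B > 0" "dist B C > 0" using nc by (auto simp: insert_commute)
  ultimately have "a * (q * dist A B / ((1 - q) * dist A B)) = v * q"
    and "c * ((1 - r) * dist B C / (r * dist B C)) = (1 - v) * (1 - r)"
    using bary q by auto
  thus ?thesis
    using bary(2) q r unfolding t Fr
    by (simp add: dist_convex_comb_left dist_convex_comb_right dist_commute[of B C])
qed

theorem lemma7p1:
  fixes A B C P D :: "real^2" and \<alpha> \<beta> \<gamma> :: real
  assumes tri: "\<not> collinear {A, B, C}"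
    and O_in: "P \<in> interior (convex hull {A, B, C})"
    and \<alpha>_def: "\<alpha> = infdist P (affine hull {B, C}) / infdist A (affine hull {B, C})"
    and \<beta>_def: "\<beta> = infdist P (affine hull {C, A}) / infdist B (affine hull {C, A})"
    and \<gamma>_def: "\<gamma> = infdist P (affine hull {A, B}) / infdist C (affine hull {A, B})"
    and D: "D \<in> closed_segment A B" "collinear {C, P, D}"
  shows "\<forall>t \<in> closed_segment A D.
           (\<exists>F \<in> closed_segment B C. collinear {t, P, F}) \<and>
           (\<forall>F \<in> closed_segment B C. collinear {t, P, F} \<longrightarrow>
              \<alpha> * (dist t A / dist t B) + \<gamma> * (dist F C / dist F B) = \<beta>)"
proof (intro ballI conjI impI)
  obtain a b c where pos: "0 < a" "0 < b" "0 < c" and sum: "a + b + c = 1"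
    and P: "P = a *\<^sub>R A + b *\<^sub>R B + c *\<^sub>R C"
    using O_in interior_convex_hull_3_minimal[OF tri] by auto
  have coeffs: "\<alpha> = a" "\<beta> = b" "\<gamma> = c"
    unfolding \<alpha>_def \<beta>_def \<gamma>_def
    using infdist_ratio_eq_barycentric[OF tri P sum pos]
      infdist_ratio_eq_barycentric[of B C A P b c a] infdist_ratio_eq_barycentric[of C A B P c a b]
      tri P sum pos by (auto simp: insert_commute algebra_simps)
  obtain d where d: "0 \<le> d" and Dd: "D = (1 - d) *\<^sub>R A + d *\<^sub>R B"
    using D(1) unfolding closed_segment_def by auto
  have foot: "(a + b) * d = b" using cevian_foot_param[OF tri P sum Dd D(2)] .
  fix t assume "t \<in> closed_segment A D"
  then obtain q where q: "0 \<le> q" "q \<le> d" and t: "t = (1 - q) *\<^sub>R A + q *\<^sub>R B"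
    using closed_segment_subsegment_param d Dd by metis
  have q_bound: "(a + b) * q \<le> b" using foot q pos by (metis add_pos_pos mult_left_mono less_imp_le)
  then show "\<exists>F \<in> closed_segment B C. collinear {t, P, F}"
    by (rule transversal_meets_side[OF P sum pos t q(1)])
  have "q < 1" using cevian_param_lt_one pos q_bound by blast
  moreover fix F assume "F \<in> closed_segment B C" "collinear {t, P, F}"
  ultimately show "\<alpha> * (dist t A / dist t B) + \<gamma> * (dist F C / dist F B) = \<beta>"
    unfolding coeffs by (rule transversal_ratio_identity[OF tri P sum pos(3) t q(1)])
qed

end
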